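(* In the setting below, assume $Z_1(1)\in\overline{\mathsf{Q}_1}$ and $Z_2(1)\in\overline{\mathsf{Q}_4}$, and define $\widetilde Z_1(t)=(|Z_{1x}(t)|,|Z_{1y}(t)|)$, $\widetilde Z_2(t)=(|Z_{2x}(t)|,-|Z_{2y}(t)|)$ for $t\in[0,1]$. Then for every $t\in(0,1]$, \[U(Z_1(t),Z_2(t))\ge U(\widetilde Z_1(t),\widetilde Z_2(t)),\] where $U(Z_1,Z_2)=\frac{1}{|Z_1|}+\frac{1}{|Z_2+\frac12Z_1|}+\frac{1}{|Z_2-\frac12Z_1|}$, and equality holds if and only if $Z_1(t)$ and $Z_2(t)$ lie in two adjacent closed quadrants respectively.
   Context: Planar three-body problem with masses $m_1=m_2=m_3=1$, $\chi=\{q=(q_1,q_2,q_3)\in(\mathbb{R}^2)^3: q_1+q_2+q_3=0\}$, action $\mathcal{A}(q)=\int_0^1\big(\tfrac12\sum|\dot q_i|^2+\sum_{i<j}\frac{1}{|q_i-q_j|}\big)dt$. Let $Q_{S_4}=\{q: q_1=q_2=(-a_2,0),\ q_3=(2a_2,0),\ a_2\ge0\}$ and $Q_{E_1}=\{q: q_1=(0,-2b_1),\ q_2=(-b_2,b_1),\ q_3=(b_2,b_1),\ b_1,b_2\in\mathbb{R}\}$. Let $q$ minimize $\mathcal{A}$ over $\{q\in H^1([0,1],\chi): q(0)\in Q_{S_4},\ q(1)\in Q_{E_1}\}$. Jacobi coordinates: $Z_1=q_1-q_2=(Z_{1x},Z_{1y})$, $Z_2=q_3-\frac{q_1+q_2}{2}=(Z_{2x},Z_{2y})$;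 in these coordinates $\mathcal{A}=\int_0^1\big(\tfrac14|\dot Z_1|^2+\tfrac13|\dot Z_2|^2+U(Z_1,Z_2)\big)dt$. Standing facts/assumptions: the minimizer is collision-free for $t\in(0,1]$ (so $Z_1(t)\neq0$ there and it solves Newton's equations), $Z_1(0)=0$, and $Z_2(0)=(3a_2,0)$ with $a_2>0$. $\mathsf{Q}_i$ denotes the open $i$-th quadrant of the $xy$-plane and $\overline{\mathsf{Q}_i}$ its closure; two quadrants are adjacent if they share a half-axis. *)

theory Defs
  imports "HOL-Analysis.Analysis"
begin

(* Points of the plane R^2 are represented as complex numbers: (x,y) ~ Complex x y. *)

definition weak_deriv :: "(real \<Rightarrow> complex) \<Rightarrow> (real \<Rightarrow> complex) \<Rightarrow> bool" where
  "weak_deriv f g \<longleftrightarrow> g integrable_on {0..1} \<and>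
      (\<forall>t\<in>{0..1}. f t = f 0 + integral {0..t} g)"

definition H1 :: "(real \<Rightarrow> complex) \<Rightarrow> bool" where
  "H1 f \<longleftrightarrow> (\<exists>g. weak_deriv f g \<and> (\<lambda>t. (norm (g t))\<^sup>2) integrable_on {0..1})"

definition wderiv :: "(real \<Rightarrow> complex) \<Rightarrow> real \<Rightarrow> complex" where
  "wderiv f = (SOME g. weak_deriv f g \<and> (\<lambda>t. (norm (g t))\<^sup>2) integrable_on {0..1})"

definition invd :: "complex \<Rightarrow> ennreal" where
  "invd z = (if z = 0 then \<infinity> else ennreal (1 / norm z))"

definition action :: "(real \<Rightarrow> complex) \<Rightarrow> (real \<Rightarrow> complex) \<Rightarrow> (real \<Rightarrow> complex) \<Rightarrow> ennreal" where
  "action q1 q2 q3 = (\<integral>\<^sup>+ t\<in>{0..1}.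
      ennreal (1/2 * ((norm (wderiv q1 t))\<^sup>2 + (norm (wderiv q2 t))\<^sup>2 + (norm (wderiv q3 t))\<^sup>2))
      + invd (q1 t - q2 t) + invd (q1 t - q3 t) + invd (q2 t - q3 t) \<partial>lebesgue)"

definition Q_S4 :: "(complex \<times> complex \<times> complex) set" where
  "Q_S4 = {(p1, p2, p3). \<exists>a2::real. a2 \<ge> 0 \<and> p1 = Complex (-a2) 0 \<and> p2 = Complex (-a2) 0
                                      \<and> p3 = Complex (2*a2) 0}"

definition Q_E1 :: "(complex \<times> complex \<times> complex) set" where
  "Q_E1 = {(p1, p2, p3). \<exists>b1 b2::real. p1 = Complex 0 (-2*b1) \<and> p2 = Complex (-b2) b1
                                      \<and> p3 = Complex b2 b1}"

definition admissible :: "(real \<Rightarrow> complex) \<Rightarrow> (real \<Rightarrow> complex) \<Rightarrow> (real \<Rightarrow> complex) \<Rightarrow> bool" where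
  "admissible q1 q2 q3 \<longleftrightarrow> H1 q1 \<and> H1 q2 \<and> H1 q3 \<and>
     (\<forall>t\<in>{0..1}. q1 t + q2 t + q3 t = 0) \<and>
     (q1 0, q2 0, q3 0) \<in> Q_S4 \<and> (q1 1, q2 1, q3 1) \<in> Q_E1"

definition action_minimizer :: "(real \<Rightarrow> complex) \<Rightarrow> (real \<Rightarrow> complex) \<Rightarrow> (real \<Rightarrow> complex) \<Rightarrow> bool" where
  "action_minimizer q1 q2 q3 \<longleftrightarrow> admissible q1 q2 q3 \<and>
     (\<forall>p1 p2 p3. admissible p1 p2 p3 \<longrightarrow> action q1 q2 q3 \<le> action p1 p2 p3)"

(* potential in Jacobi coordinates *)
definition U :: "complex \<Rightarrow> complex \<Rightarrow> real" where
  "U Z1 Z2 = 1 / norm Z1 + 1 / norm (Z2 + Z1 / 2) + 1 / norm (Z2 - Z1 / 2)"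

definition quadrant :: "nat \<Rightarrow> complex set" where
  "quadrant i = (if i = 1 then {z. Re z > 0 \<and> Im z > 0}
                 else if i = 2 then {z. Re z < 0 \<and> Im z > 0}
                 else if i = 3 then {z. Re z < 0 \<and> Im z < 0}
                 else if i = 4 then {z. Re z > 0 \<and> Im z < 0}
                 else {})"

definition adjacent_quadrants :: "nat \<Rightarrow> nat \<Rightarrow> bool" where
  "adjacent_quadrants i j \<longleftrightarrow> i \<in> {1..4} \<and> j \<in> {1..4} \<and>
     (j = i mod 4 + 1 \<or> i = j mod 4 + 1)"

end

theory Submission
  imports Defs
begin

text \<open>With \<open>w\<^sub>\<pm> = Z\<^sub>2 \<pm> Z\<^sub>1/2\<close>, the parallelogram law fixes \<open>|w\<^sub>+|\<^sup>2 + |w\<^sub>-|\<^sup>2\<close> in terms of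
  \<open>|Z\<^sub>1|\<close> and \<open>|Z\<^sub>2|\<close>, while \<open>|w\<^sub>+|\<^sup>2 |w\<^sub>-|\<^sup>2 = s\<^sup>2 - (Z\<^sub>1\<bullet>Z\<^sub>2)\<^sup>2\<close> with \<open>s = |Z\<^sub>2|\<^sup>2 + |Z\<^sub>1|\<^sup>2/4\<close>.
  For a fixed sum of squares, \<open>1/u + 1/v\<close> is a strictly decreasing function of \<open>u v\<close>, so the
  potential depends on the configuration only through \<open>|Z\<^sub>1|\<close>, \<open>|Z\<^sub>2|\<close> and \<open>(Z\<^sub>1\<bullet>Z\<^sub>2)\<^sup>2\<close>,
  strictly increasingly in the last. Folding \<open>Z\<^sub>1\<close> into the first and \<open>Z\<^sub>2\<close> into the fourth
  quadrant keeps the norms and replaces \<open>Z\<^sub>1\<bullet>Z\<^sub>2 = x + y\<close> (with \<open>x = Re Z\<^sub>1 Re Z\<^sub>2\<close>,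
  \<open>y = Im Z\<^sub>1 Im Z\<^sub>2\<close>) by \<open>|x| - |y|\<close>, which has smaller square, with equality exactly when
  \<open>x y \<le> 0\<close>, i.e. when \<open>Z\<^sub>1\<close> and \<open>Z\<^sub>2\<close> lie in adjacent closed quadrants.\<close>

lemma inverse_sum_le_iff_prod_le:
  fixes u v u' v' :: real
  assumes "u > 0" "v > 0" "u' > 0" "v' > 0" and "u\<^sup>2 + v\<^sup>2 = u'\<^sup>2 + v'\<^sup>2"
  shows "1/u' + 1/v' \<le> 1/u + 1/v \<longleftrightarrow> u * v \<le> u' * v'"
proof -
  define k where "k = u\<^sup>2 + v\<^sup>2"
  define g where "g p = k / p\<^sup>2 + 2 / p" for p :: real
  have sq: "(1/x + 1/y)\<^sup>2 = g (x * y)" if "x > 0" "y > 0" "x\<^sup>2 + y\<^sup>2 = k" for x y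
    using that by (auto simp: g_def field_simps power2_eq_square)
  have "k > 0"
    using \<open>u > 0\<close> by (simp add: k_def add_pos_nonneg)
  have g_le_iff: "g q \<le> g p \<longleftrightarrow> p \<le> q" if "p > 0" "q > 0" for p q
  proof
    assume "p \<le> q"
    then show "g q \<le> g p"
      using that \<open>k > 0\<close> unfolding g_def
      by (intro add_mono divide_left_mono power_mono mult_pos_pos) auto
  next
    assume "g q \<le> g p"
    moreover have "q < p \<Longrightarrow> g p < g q"
      using that \<open>k > 0\<close> unfolding g_def
      by (intro add_strict_mono divide_strict_left_mono power_strict_mono) auto
    ultimately show "p \<le> q"
      by linarith
  qed
  have "1/u' + 1/v' \<le> 1/u + 1/v \<longleftrightarrow> (1/u' + 1/v')\<^sup>2 \<le> (1/u + 1/v)\<^sup>2"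
    using assms by (intro power_mono_iff [symmetric]) simp_all
  also have "\<dots> \<longleftrightarrow> u * v \<le> u' * v'"
    using assms by (simp add: sq k_def g_le_iff)
  finally show ?thesis .
qed

lemma norm_add_half_square:
  fixes z w :: complex
  shows "(norm (w + z/2))\<^sup>2 = (norm w)\<^sup>2 + (norm z)\<^sup>2 / 4 + z \<bullet> w"
    and "(norm (w - z/2))\<^sup>2 = (norm w)\<^sup>2 + (norm z)\<^sup>2 / 4 - z \<bullet> w"
  unfolding cmod_power2 inner_complex_def by (simp_all add: power2_eq_square algebra_simps)

lemma U_le_of_inner_square_le:
  fixes Z1 Z2 W1 W2 :: complex
  assumes norm_eq: "norm W1 = norm Z1" "norm W2 = norm Z2"
    and nonzero: "Z2 + Z1/2 \<noteq> 0" "Z2 - Z1/2 \<noteq> 0"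
    and inner_le: "(W1 \<bullet> W2)\<^sup>2 \<le> (Z1 \<bullet> Z2)\<^sup>2"
  shows "U W1 W2 \<le> U Z1 Z2"
    and "U W1 W2 = U Z1 Z2 \<longleftrightarrow> (W1 \<bullet> W2)\<^sup>2 = (Z1 \<bullet> Z2)\<^sup>2"
proof -
  define s where "s = (norm Z2)\<^sup>2 + (norm Z1)\<^sup>2 / 4"
  define u where "u = norm (Z2 + Z1/2)"
  define v where "v = norm (Z2 - Z1/2)"
  define u' where "u' = norm (W2 + W1/2)"
  define v' where "v' = norm (W2 - W1/2)"
  have prod_square: "(x * y)\<^sup>2 = s\<^sup>2 - c\<^sup>2" if "x\<^sup>2 = s + c" "y\<^sup>2 = s - c" for x y c :: real
    unfolding power_mult_distrib that by (simp add: power2_eq_square algebra_simps)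
  have Z_prod: "(u * v)\<^sup>2 = s\<^sup>2 - (Z1 \<bullet> Z2)\<^sup>2"
    by (rule prod_square) (simp_all add: u_def v_def s_def norm_add_half_square)
  have W_prod: "(u' * v')\<^sup>2 = s\<^sup>2 - (W1 \<bullet> W2)\<^sup>2"
    by (rule prod_square) (simp_all add: u'_def v'_def s_def norm_add_half_square norm_eq)
  have "u > 0" "v > 0"
    using nonzero by (simp_all add: u_def v_def)
  have "0 < (u * v)\<^sup>2"
    using \<open>u > 0\<close> \<open>v > 0\<close> by simp
  also have "\<dots> \<le> (u' * v')\<^sup>2"
    using Z_prod W_prod inner_le by simp
  finally have "u' > 0" "v' > 0"
    by (auto simp: u'_def v'_def)
  have prod_le_iff: "x * y \<le> x' * y' \<longleftrightarrow> (x * y)\<^sup>2 \<le> (x' * y')\<^sup>2"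
    if "x > 0" "y > 0" "x' > 0" "y' > 0" for x y x' y' :: real
    using that by (intro power_mono_iff [symmetric]) simp_all
  have sum_squares: "u\<^sup>2 + v\<^sup>2 = u'\<^sup>2 + v'\<^sup>2"
    by (simp add: u_def v_def u'_def v'_def norm_add_half_square norm_eq)
  note compare = inverse_sum_le_iff_prod_le
    [OF \<open>u > 0\<close> \<open>v > 0\<close> \<open>u' > 0\<close> \<open>v' > 0\<close> sum_squares]
  note compare' = inverse_sum_le_iff_prod_le
    [OF \<open>u' > 0\<close> \<open>v' > 0\<close> \<open>u > 0\<close> \<open>v > 0\<close> sum_squares [symmetric]]
  have U_Z: "U Z1 Z2 = 1 / norm Z1 + (1/u + 1/v)"
    by (simp add: U_def u_def v_def)
  have U_W: "U W1 W2 = 1 / norm Z1 + (1/u' + 1/v')"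
    by (simp add: U_def u'_def v'_def norm_eq)
  show "U W1 W2 \<le> U Z1 Z2"
    using compare prod_le_iff [OF \<open>u > 0\<close> \<open>v > 0\<close> \<open>u' > 0\<close> \<open>v' > 0\<close>] Z_prod W_prod inner_le
    by (simp add: U_Z U_W)
  have "U W1 W2 = U Z1 Z2 \<longleftrightarrow> u' * v' \<le> u * v"
    using compare compare' prod_le_iff [OF \<open>u > 0\<close> \<open>v > 0\<close> \<open>u' > 0\<close> \<open>v' > 0\<close>]
      Z_prod W_prod inner_le
    by (auto simp: U_Z U_W)
  also have "\<dots> \<longleftrightarrow> (W1 \<bullet> W2)\<^sup>2 = (Z1 \<bullet> Z2)\<^sup>2"
    using prod_le_iff [OF \<open>u' > 0\<close> \<open>v' > 0\<close> \<open>u > 0\<close> \<open>v > 0\<close>] Z_prod W_prod inner_le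
    by auto
  finally show "U W1 W2 = U Z1 Z2 \<longleftrightarrow> (W1 \<bullet> W2)\<^sup>2 = (Z1 \<bullet> Z2)\<^sup>2" .
qed

lemma square_abs_diff_abs_le:
  fixes x y :: real
  shows "(\<bar>x\<bar> - \<bar>y\<bar>)\<^sup>2 \<le> (x + y)\<^sup>2"
    and "(\<bar>x\<bar> - \<bar>y\<bar>)\<^sup>2 = (x + y)\<^sup>2 \<longleftrightarrow> x * y \<le> 0"
proof -
  have "(x + y)\<^sup>2 - (\<bar>x\<bar> - \<bar>y\<bar>)\<^sup>2 = 2 * (x * y + \<bar>x * y\<bar>)"
    by (simp add: power2_eq_square algebra_simps abs_mult)
  then show "(\<bar>x\<bar> - \<bar>y\<bar>)\<^sup>2 \<le> (x + y)\<^sup>2"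
    and "(\<bar>x\<bar> - \<bar>y\<bar>)\<^sup>2 = (x + y)\<^sup>2 \<longleftrightarrow> x * y \<le> 0"
    by (auto simp: abs_if split: if_splits)
qed

lemma closure_orthant:
  fixes a b :: "'a::euclidean_space"
  assumes "a \<noteq> 0" "b \<noteq> 0" "a \<bullet> b = 0"
  shows "closure {x. 0 < a \<bullet> x \<and> 0 < b \<bullet> x} = {x. 0 \<le> a \<bullet> x \<and> 0 \<le> b \<bullet> x}"
proof -
  have "rel_interior {x. 0 < c \<bullet> x} = {x. 0 < c \<bullet> x}" for c :: 'a
    by (simp add: rel_interior_open open_halfspace_gt)
  then have "a + b \<in> rel_interior {x. 0 < a \<bullet> x} \<inter> rel_interior {x. 0 < b \<bullet> x}"
    using assms by (simp add: inner_add_right inner_commute [of b a])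
  then have "closure ({x. 0 < a \<bullet> x} \<inter> {x. 0 < b \<bullet> x}) = {x. 0 \<le> a \<bullet> x} \<inter> {x. 0 \<le> b \<bullet> x}"
    using assms by (subst closure_Int_convex) (auto simp: convex_halfspace_gt)
  then show ?thesis
    by (simp add: Collect_conj_eq)
qed

lemma closure_quadrant:
  shows "closure (quadrant 1) = {z. 0 \<le> Re z \<and> 0 \<le> Im z}"
    and "closure (quadrant 2) = {z. Re z \<le> 0 \<and> 0 \<le> Im z}"
    and "closure (quadrant 3) = {z. Re z \<le> 0 \<and> Im z \<le> 0}"
    and "closure (quadrant 4) = {z. 0 \<le> Re z \<and> Im z \<le> 0}"
  using closure_orthant [of 1 \<i>] closure_orthant [of "-1" \<i>]
    closure_orthant [of "-1" "-\<i>"] closure_orthant [of 1 "-\<i>"]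
  by (simp_all add: quadrant_def)

lemma adjacent_quadrants_iff:
  "adjacent_quadrants i j \<longleftrightarrow>
     (i, j) \<in> {(1,2), (2,1), (2,3), (3,2), (3,4), (4,3), (4,1), (1,4)}"
proof
  assume adj: "adjacent_quadrants i j"
  then have "i \<in> {1, 2, 3, 4}" "j \<in> {1, 2, 3, 4}"
    by (auto simp: adjacent_quadrants_def)
  then show "(i, j) \<in> {(1,2), (2,1), (2,3), (3,2), (3,4), (4,3), (4,1), (1,4)}"
    using adj by (auto simp: adjacent_quadrants_def)
qed (auto simp: adjacent_quadrants_def)

lemma adjacent_closed_quadrants_iff:
  fixes z w :: complex
  shows "(\<exists>i j. adjacent_quadrants i j \<and> z \<in> closure (quadrant i) \<and> w \<in> closure (quadrant j))
           \<longleftrightarrow> (Re z * Re w) * (Im z * Im w) \<le> 0"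
proof -
  have signs: "(a*c)*(b*d) \<le> 0 \<longleftrightarrow>
    (a \<ge> 0 \<and> b \<ge> 0 \<and> c \<le> 0 \<and> d \<ge> 0) \<or> (a \<le> 0 \<and> b \<ge> 0 \<and> c \<ge> 0 \<and> d \<ge> 0) \<or>
    (a \<le> 0 \<and> b \<ge> 0 \<and> c \<le> 0 \<and> d \<le> 0) \<or> (a \<le> 0 \<and> b \<le> 0 \<and> c \<le> 0 \<and> d \<ge> 0) \<or>
    (a \<le> 0 \<and> b \<le> 0 \<and> c \<ge> 0 \<and> d \<le> 0) \<or> (a \<ge> 0 \<and> b \<le> 0 \<and> c \<le> 0 \<and> d \<le> 0) \<or>
    (a \<ge> 0 \<and> b \<le> 0 \<and> c \<ge> 0 \<and> d \<ge> 0) \<or> (a \<ge> 0 \<and> b \<ge> 0 \<and> c \<ge> 0 \<and> d \<le> 0)"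
    for a b c d :: real
    by (cases "a \<ge> 0"; cases "b \<ge> 0"; cases "c \<ge> 0"; cases "d \<ge> 0")
       (auto simp: mult_le_0_iff zero_le_mult_iff)
  have adjacent_pairs: "(\<exists>i j. adjacent_quadrants i j \<and> P i \<and> Q j) \<longleftrightarrow>
    P 1 \<and> Q 2 \<or> P 2 \<and> Q 1 \<or> P 2 \<and> Q 3 \<or> P 3 \<and> Q 2 \<or>
    P 3 \<and> Q 4 \<or> P 4 \<and> Q 3 \<or> P 4 \<and> Q 1 \<or> P 1 \<and> Q 4" for P Q :: "nat \<Rightarrow> bool"
    unfolding adjacent_quadrants_iff by blast
  show ?thesis
    unfolding adjacent_pairs closure_quadrant mem_Collect_eq
      signs [where a = "Re z" and b = "Im z" and c = "Re w" and d = "Im w"]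
    by argo
qed

theorem lemma5p4:
  fixes q1 q2 q3 :: "real \<Rightarrow> complex"
  defines "Z1 \<equiv> \<lambda>t. q1 t - q2 t"
    and "Z2 \<equiv> \<lambda>t. q3 t - (q1 t + q2 t) / 2"
    and "Z1t \<equiv> \<lambda>t. Complex \<bar>Re (q1 t - q2 t)\<bar> \<bar>Im (q1 t - q2 t)\<bar>"
    and "Z2t \<equiv> \<lambda>t. Complex \<bar>Re (q3 t - (q1 t + q2 t) / 2)\<bar> (- \<bar>Im (q3 t - (q1 t + q2 t) / 2)\<bar>)"
  assumes min: "action_minimizer q1 q2 q3"
    and collision_free: "\<forall>t\<in>{0<..1}. q1 t \<noteq> q2 t \<and> q1 t \<noteq> q3 t \<and> q2 t \<noteq> q3 t"
    and Z1_0: "Z1 0 = 0"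
    and Z2_0: "\<exists>a2::real. a2 > 0 \<and> Z2 0 = Complex (3 * a2) 0"
    and Z1_1: "Z1 1 \<in> closure (quadrant 1)"
    and Z2_1: "Z2 1 \<in> closure (quadrant 4)"
  shows "\<forall>t\<in>{0<..1}.
           U (Z1 t) (Z2 t) \<ge> U (Z1t t) (Z2t t) \<and>
           (U (Z1 t) (Z2 t) = U (Z1t t) (Z2t t) \<longleftrightarrow>
              (\<exists>i j. adjacent_quadrants i j \<and> Z1 t \<in> closure (quadrant i)
                                            \<and> Z2 t \<in> closure (quadrant j)))"
proof
  fix t :: real
  assume "t \<in> {0<..1}"
  with collision_free have "q3 t - q2 t \<noteq> 0" "q3 t - q1 t \<noteq> 0"
    by (metis eq_iff_diff_eq_0)+
  then have "Z2 t + Z1 t / 2 \<noteq> 0" "Z2 t - Z1 t / 2 \<noteq> 0"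
    by (simp_all add: Z1_def Z2_def field_simps)
  moreover have "norm (Z1t t) = norm (Z1 t)" "norm (Z2t t) = norm (Z2 t)"
    by (simp_all add: Z1t_def Z2t_def Z1_def Z2_def cmod_def)
  moreover have "Z1t t \<bullet> Z2t t = \<bar>Re (Z1 t) * Re (Z2 t)\<bar> - \<bar>Im (Z1 t) * Im (Z2 t)\<bar>"
    by (simp add: Z1t_def Z2t_def Z1_def Z2_def inner_complex_def abs_mult)
  moreover have "Z1 t \<bullet> Z2 t = Re (Z1 t) * Re (Z2 t) + Im (Z1 t) * Im (Z2 t)"
    by (simp add: inner_complex_def)
  ultimately have "U (Z1t t) (Z2t t) \<le> U (Z1 t) (Z2 t)"
    and "U (Z1t t) (Z2t t) = U (Z1 t) (Z2 t) \<longleftrightarrow> (Re (Z1 t) * Re (Z2 t)) * (Im (Z1 t) * Im (Z2 t)) \<le> 0"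
    using U_le_of_inner_square_le [of "Z1t t" "Z1 t" "Z2t t" "Z2 t"] square_abs_diff_abs_le
    by simp_all
  then show "U (Z1 t) (Z2 t) \<ge> U (Z1t t) (Z2t t) \<and>
      (U (Z1 t) (Z2 t) = U (Z1t t) (Z2t t) \<longleftrightarrow>
        (\<exists>i j. adjacent_quadrants i j \<and> Z1 t \<in> closure (quadrant i) \<and> Z2 t \<in> closure (quadrant j)))"
    unfolding adjacent_closed_quadrants_iff by auto
qed

end
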